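(* Let $A$ be a seminormal cancellative monoid. Then the conductor ideal $I$ of the inclusion $A\hookrightarrow A_{\mathrm{nor}}$ is a radical ideal of both $A$ and $A_{\mathrm{nor}}$.
   Context: A monoid is a pointed commutative monoid; cancellative means $ac=bc$ with $c\ne0$ implies $a=b$; seminormal means reduced ($a^2=b^2,a^3=b^3\Rightarrow a=b$) and whenever $x^3=y^2$ there is $z$ with $x=z^2,y=z^3$. For cancellative $A$, $A^+$ is the group completion of $A\setminus\{0\}$ with a basepoint adjoined, and $A_{\mathrm{nor}}=\{\alpha\in A^+:\alpha^n\in A\text{ for some }n\ge1\}$. The conductor ideal of $A\subset A_{\mathrm{nor}}$ is $I=\{a\in A: A_{\mathrm{nor}}\cdot a\subseteq A\}$ (an ideal of both $A$ and $A_{\mathrm{nor}}$). An ideal $I$ of a monoid $B$ is radical if $b^n\in I$ for some $n\ge1$ implies $b\in I$. *)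

theory Defs
  imports Main
begin

text \<open>A pointed commutative monoid is modelled as a type of sort
  comm_monoid_mult and mult_zero: the whole type is the monoid, 1 is the unit
  and 0 is the basepoint (absorbing element).\<close>

definition cancellative :: "'a::{comm_monoid_mult,mult_zero} itself \<Rightarrow> bool" where
  "cancellative _ \<longleftrightarrow> (\<forall>a b c::'a. a * c = b * c \<and> c \<noteq> 0 \<longrightarrow> a = b)"

definition reduced :: "'a::{comm_monoid_mult,mult_zero} itself \<Rightarrow> bool" where
  "reduced _ \<longleftrightarrow> (\<forall>a b::'a. a ^ 2 = b ^ 2 \<and> a ^ 3 = b ^ 3 \<longrightarrow> a = b)"

definition seminormal :: "'a::{comm_monoid_mult,mult_zero} itself \<Rightarrow> bool" where
  "seminormal T \<longleftrightarrow> reduced T \<and>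
     (\<forall>x y::'a. x ^ 3 = y ^ 2 \<longrightarrow> (\<exists>z. x = z ^ 2 \<and> y = z ^ 3))"

text \<open>Group completion of A minus 0: classes of formal fractions a/b with a, b nonzero,
  (a,b) ~ (c,d) iff a d = b c.  The basepoint of A^+ is None.\<close>

definition frac :: "'a::{comm_monoid_mult,mult_zero} \<Rightarrow> 'a \<Rightarrow> ('a \<times> 'a) set" where
  "frac a b = {(c, d). c \<noteq> 0 \<and> d \<noteq> 0 \<and> a * d = b * c}"

definition gp_plus :: "'a::{comm_monoid_mult,mult_zero} itself \<Rightarrow> ('a \<times> 'a) set option set" where
  "gp_plus _ = insert None (Some ` {frac a b | a b::'a. a \<noteq> 0 \<and> b \<noteq> 0})"

definition gp_mult :: "('a::{comm_monoid_mult,mult_zero} \<times> 'a) set option \<Rightarrow>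
    ('a \<times> 'a) set option \<Rightarrow> ('a \<times> 'a) set option" where
  "gp_mult X Y = (case (X, Y) of
      (Some P, Some Q) \<Rightarrow>
        (let p = (SOME p. p \<in> P); q = (SOME q. q \<in> Q)
         in Some (frac (fst p * fst q) (snd p * snd q)))
    | _ \<Rightarrow> None)"

definition gp_emb :: "'a::{comm_monoid_mult,mult_zero} \<Rightarrow> ('a \<times> 'a) set option" where
  "gp_emb a = (if a = 0 then None else Some (frac a 1))"

fun gp_pow :: "('a::{comm_monoid_mult,mult_zero} \<times> 'a) set option \<Rightarrow> nat \<Rightarrow> ('a \<times> 'a) set option" where
  "gp_pow X 0 = gp_emb 1"
| "gp_pow X (Suc n) = gp_mult X (gp_pow X n)"

definition gp_A :: "'a::{comm_monoid_mult,mult_zero} itself \<Rightarrow> ('a \<times> 'a) set option set" where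
  "gp_A _ = range (gp_emb :: 'a \<Rightarrow> _)"

definition A_nor :: "'a::{comm_monoid_mult,mult_zero} itself \<Rightarrow> ('a \<times> 'a) set option set" where
  "A_nor T = {\<alpha> \<in> gp_plus T. \<exists>n\<ge>1. gp_pow \<alpha> n \<in> gp_A T}"

definition conductor :: "'a::{comm_monoid_mult,mult_zero} itself \<Rightarrow> 'a set" where
  "conductor T = {a. \<forall>\<alpha>\<in>A_nor T. gp_mult \<alpha> (gp_emb a) \<in> gp_A T}"

definition is_ideal_A :: "'a::{comm_monoid_mult,mult_zero} set \<Rightarrow> bool" where
  "is_ideal_A I \<longleftrightarrow> 0 \<in> I \<and> (\<forall>a x. x \<in> I \<longrightarrow> a * x \<in> I)"

definition radical_A :: "'a::{comm_monoid_mult,mult_zero} set \<Rightarrow> bool" where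
  "radical_A I \<longleftrightarrow> (\<forall>b n. n \<ge> 1 \<and> b ^ n \<in> I \<longrightarrow> b \<in> I)"

definition is_ideal_in :: "'b set \<Rightarrow> ('b \<Rightarrow> 'b \<Rightarrow> 'b) \<Rightarrow> 'b \<Rightarrow> 'b set \<Rightarrow> bool" where
  "is_ideal_in B m z J \<longleftrightarrow> J \<subseteq> B \<and> z \<in> J \<and> (\<forall>b\<in>B. \<forall>x\<in>J. m b x \<in> J)"

definition radical_in :: "'b set \<Rightarrow> ('b \<Rightarrow> nat \<Rightarrow> 'b) \<Rightarrow> 'b set \<Rightarrow> bool" where
  "radical_in B p J \<longleftrightarrow> (\<forall>b\<in>B. \<forall>n\<ge>1. p b n \<in> J \<longrightarrow> b \<in> J)"

end

theory Submission
  imports Defs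
begin

text \<open>Write the nonzero elements of A^+ as fractions a/b. Then a/b lies in A_nor iff b^m divides
  a^m for some m \<ge> 1, and x lies in the conductor iff b divides a x for every such a/b.
  Seminormality turns "b^k divides a^k for all k \<ge> N" into "b divides a": from the exponents
  2N and 3N one gets b^N | a^N, and one descends to N = 1.
  Radicality follows from this descent. If y^n \<in> I and a/b \<in> A_nor, then for all k \<ge> n the
  element (ay/b)^k = (a/b)^k y^(k-n) y^n lies in A, because (a/b)^k y^(k-n) is in A_nor; hence
  ay/b \<in> A. Likewise, if \<alpha> \<in> A_nor and \<alpha>^n \<in> I, then \<alpha>^k = \<alpha>^(k-n) \<alpha>^n \<in> A for k \<ge> n,
  so \<alpha> \<in> A, and \<alpha> \<in> I by radicality of I in A.\<close>

lemma dvd_power_same_monoid: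
  fixes x y :: "'a::comm_monoid_mult"
  shows "x dvd y \<Longrightarrow> x ^ n dvd y ^ n"
  by (induction n) (simp_all add: mult_dvd_mono)

definition frac_integral :: "'a::comm_monoid_mult \<Rightarrow> 'a \<Rightarrow> bool" where
  "frac_integral a b \<longleftrightarrow> (\<exists>m\<ge>1. b ^ m dvd a ^ m)"

lemma power_swap_exponents: "((x::'a::monoid_mult) ^ j) ^ m = (x ^ m) ^ j"
  by (simp flip: power_mult add: mult.commute)

lemma frac_integral_power: "frac_integral a b \<Longrightarrow> frac_integral (a ^ j) (b ^ j)"
  unfolding frac_integral_def by (metis dvd_power_same_monoid power_swap_exponents)

lemma frac_integral_mult:
  assumes "frac_integral a b" and "frac_integral a' b'"
  shows "frac_integral (a * a') (b * b')"
proof -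
  obtain m m' where "m \<ge> 1" "b ^ m dvd a ^ m" "m' \<ge> 1" "b' ^ m' dvd a' ^ m'"
    using assms by (auto simp: frac_integral_def)
  then have "b ^ (m * m') dvd a ^ (m * m')" "b' ^ (m * m') dvd a' ^ (m * m')"
    by (metis dvd_power_same_monoid power_mult, metis dvd_power_same_monoid power_mult mult.commute)
  then have "(b * b') ^ (m * m') dvd (a * a') ^ (m * m')"
    by (simp add: power_mult_distrib mult_dvd_mono)
  moreover have "m * m' \<ge> 1" using \<open>m \<ge> 1\<close> \<open>m' \<ge> 1\<close> by simp
  ultimately show ?thesis unfolding frac_integral_def by blast
qed

lemma frac_integral_one: "frac_integral a 1"
  by (auto simp: frac_integral_def intro!: exI[of _ 1])

lemma dvd_0_right_pointed [simp]: "(b::'a::{comm_monoid_mult,mult_zero}) dvd 0"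
  by (metis dvdI mult_zero_right)

lemma dvd_0_left_iff_pointed [simp]: "0 dvd (a::'a::{comm_monoid_mult,mult_zero}) \<longleftrightarrow> a = 0"
  by (auto elim: dvdE)

lemma zero_power_pointed: "0 < n \<Longrightarrow> (0::'a::{monoid_mult,mult_zero}) ^ n = 0"
  by (cases n) simp_all

lemma gp_mult_None_left [simp]: "gp_mult None Y = None"
  by (simp add: gp_mult_def)

lemma gp_mult_None_right [simp]: "gp_mult X None = None"
  by (cases X) (simp_all add: gp_mult_def)

context
  fixes T :: "'a::{comm_monoid_mult,mult_zero} itself"
  assumes cancellative: "cancellative T"
begin

lemma mult_right_cancel_nonzero: "a * c = b * c \<Longrightarrow> c \<noteq> 0 \<Longrightarrow> a = (b::'a)"
  using cancellative unfolding cancellative_def by blast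

lemma dvd_mult_cancel_left_nonzero:
  assumes "c * a dvd c * b" and "c \<noteq> (0::'a)"
  shows "a dvd b"
proof -
  obtain k where "c * b = c * a * k" using assms(1) ..
  then have "b * c = (a * k) * c" by (simp add: ac_simps)
  then have "b = a * k" using assms(2) by (rule mult_right_cancel_nonzero)
  then show ?thesis ..
qed

lemma mult_nonzero: "a \<noteq> 0 \<Longrightarrow> b \<noteq> 0 \<Longrightarrow> a * b \<noteq> (0::'a)"
  using mult_right_cancel_nonzero[of a b 0] by auto

lemma frac_self: "a \<noteq> 0 \<Longrightarrow> b \<noteq> 0 \<Longrightarrow> (a, b) \<in> frac a (b::'a)"
  by (simp add: frac_def mult.commute)

lemma frac_eq_iff:
  assumes nz: "a \<noteq> 0" "b \<noteq> 0" "c \<noteq> 0" "d \<noteq> (0::'a)"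
  shows "frac a b = frac c d \<longleftrightarrow> a * d = b * c"
proof
  assume "frac a b = frac c d"
  then have "(c, d) \<in> frac a b" using frac_self nz by simp
  then show "a * d = b * c" by (simp add: frac_def)
next
  assume e: "a * d = b * c"
  have "a * y = b * x \<longleftrightarrow> c * y = d * x" for x y
  proof
    assume "a * y = b * x"
    then have "(c * y) * a = (d * x) * a"
      by (metis e mult.assoc mult.commute)
    then show "c * y = d * x" using nz(1) by (rule mult_right_cancel_nonzero)
  next
    assume "c * y = d * x"
    then have "(a * y) * c = (b * x) * c"
      by (metis e mult.assoc mult.commute)
    then show "a * y = b * x" using nz(3) by (rule mult_right_cancel_nonzero)
  qed
  then show "frac a b = frac c d"
    unfolding frac_def by (auto simp: mult.commute)
qed

lemma gp_mult_frac:
  assumes nz: "a \<noteq> 0" "b \<noteq> 0" "c \<noteq> 0" "d \<noteq> (0::'a)"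
  shows "gp_mult (Some (frac a b)) (Some (frac c d)) = Some (frac (a * c) (b * d))"
proof -
  define p where "p = (SOME p. p \<in> frac a b)"
  define q where "q = (SOME q. q \<in> frac c d)"
  have "p \<in> frac a b" unfolding p_def using frac_self nz by (meson someI)
  then obtain p1 p2 where p: "p = (p1, p2)" "p1 \<noteq> 0" "p2 \<noteq> 0" "a * p2 = b * p1"
    by (cases p) (auto simp: frac_def)
  have "q \<in> frac c d" unfolding q_def using frac_self nz by (meson someI)
  then obtain q1 q2 where q: "q = (q1, q2)" "q1 \<noteq> 0" "q2 \<noteq> 0" "c * q2 = d * q1"
    by (cases q) (auto simp: frac_def)
  have "(p1 * q1) * (b * d) = (p2 * q2) * (a * c)"
    using p(4) q(4) by (metis mult.assoc mult.commute)
  then have "frac (p1 * q1) (p2 * q2) = frac (a * c) (b * d)"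
    using p q nz by (simp add: frac_eq_iff mult_nonzero)
  then show ?thesis
    using p q by (simp add: gp_mult_def p_def q_def Let_def)
qed

context
  assumes one_nonzero: "(1::'a) \<noteq> 0"
begin

lemma power_eq_zero_iff_cancellative: "(a::'a) ^ n = 0 \<longleftrightarrow> a = 0 \<and> n > 0"
  by (induction n) (auto simp: one_nonzero mult_nonzero)

lemma frac_eq_gp_emb_iff:
  assumes "a \<noteq> 0" "b \<noteq> (0::'a)"
  shows "Some (frac a b) = gp_emb c \<longleftrightarrow> a = b * c"
  using assms one_nonzero by (auto simp: gp_emb_def frac_eq_iff)

lemma frac_in_gp_A_iff:
  assumes "a \<noteq> 0" "b \<noteq> (0::'a)"
  shows "Some (frac a b) \<in> gp_A T \<longleftrightarrow> b dvd a"
  using frac_eq_gp_emb_iff[OF assms] by (auto simp: gp_A_def dvd_def)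

lemma None_in_gp_A: "None \<in> gp_A T"
  unfolding gp_A_def by (metis gp_emb_def rangeI)

lemma gp_mult_frac_gp_emb:
  assumes "a \<noteq> 0" "b \<noteq> 0" "x \<noteq> (0::'a)"
  shows "gp_mult (Some (frac a b)) (gp_emb x) = Some (frac (a * x) b)"
  using assms one_nonzero by (simp add: gp_emb_def gp_mult_frac)

lemma gp_pow_frac:
  assumes "a \<noteq> 0" "b \<noteq> (0::'a)"
  shows "gp_pow (Some (frac a b)) n = Some (frac (a ^ n) (b ^ n))"
proof (induction n)
  case 0
  show ?case using one_nonzero by (simp add: gp_emb_def)
next
  case (Suc n)
  then show ?case
    using assms by (simp add: gp_mult_frac power_eq_zero_iff_cancellative)
qed

lemma frac_in_A_nor_iff:
  assumes "a \<noteq> 0" "b \<noteq> (0::'a)"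
  shows "Some (frac a b) \<in> A_nor T \<longleftrightarrow> frac_integral a b"
  using assms
  by (auto simp: A_nor_def gp_plus_def gp_pow_frac frac_in_gp_A_iff frac_integral_def
      power_eq_zero_iff_cancellative)

lemma A_nor_cases:
  assumes "\<alpha> \<in> A_nor T"
  obtains "\<alpha> = None"
    | a b :: 'a where "a \<noteq> 0" "b \<noteq> 0" "frac_integral a b" "\<alpha> = Some (frac a b)"
proof (cases \<alpha>)
  case None
  then show thesis by (rule that(1))
next
  case (Some P)
  with assms obtain a b where "a \<noteq> 0" "b \<noteq> 0" "\<alpha> = Some (frac a b)"
    by (auto simp: A_nor_def gp_plus_def)
  with assms show thesis using that(2) frac_in_A_nor_iff by blast
qed

lemma gp_emb_in_A_nor: "gp_emb (x::'a) \<in> A_nor T"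
proof (cases "x = 0")
  case True
  have "gp_pow None 1 \<in> gp_A T" using None_in_gp_A by simp
  then show ?thesis using True by (auto simp: A_nor_def gp_plus_def gp_emb_def)
next
  case False
  then show ?thesis
    using one_nonzero by (simp add: gp_emb_def frac_in_A_nor_iff frac_integral_one)
qed

lemma frac_integral_zero_right:
  assumes "frac_integral a (0::'a)"
  shows "a = 0"
proof -
  obtain m where "m \<ge> 1" "(0::'a) ^ m dvd a ^ m" using assms by (auto simp: frac_integral_def)
  then show ?thesis by (simp add: zero_power_pointed power_eq_zero_iff_cancellative)
qed

lemma conductor_iff: "x \<in> conductor T \<longleftrightarrow> (\<forall>a b::'a. frac_integral a b \<longrightarrow> b dvd a * x)"
proof
  assume x: "x \<in> conductor T"
  show "\<forall>a b. frac_integral a b \<longrightarrow> b dvd a * x"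
  proof (intro allI impI)
    fix a b :: 'a
    assume ab: "frac_integral a b"
    show "b dvd a * x"
    proof (cases "a = 0 \<or> b = 0 \<or> x = 0")
      case True
      then have "a = 0 \<or> x = 0" using ab frac_integral_zero_right by blast
      then show ?thesis by auto
    next
      case False
      then have "Some (frac a b) \<in> A_nor T" using ab frac_in_A_nor_iff by blast
      then have "Some (frac (a * x) b) \<in> gp_A T"
        using x False by (auto simp: conductor_def gp_mult_frac_gp_emb)
      then show ?thesis using False by (simp add: frac_in_gp_A_iff mult_nonzero)
    qed
  qed
next
  assume x: "\<forall>a b. frac_integral a b \<longrightarrow> b dvd a * x"
  have "gp_mult \<alpha> (gp_emb x) \<in> gp_A T" if "\<alpha> \<in> A_nor T" for \<alpha>
    using that
  proof (cases rule: A_nor_cases)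
    case (2 a b)
    show ?thesis
    proof (cases "x = 0")
      case True
      then show ?thesis using None_in_gp_A by (simp add: gp_emb_def)
    next
      case False
      then show ?thesis
        using 2 x by (simp add: gp_mult_frac_gp_emb frac_in_gp_A_iff mult_nonzero)
    qed
  qed (simp add: None_in_gp_A)
  then show "x \<in> conductor T" by (simp add: conductor_def)
qed

lemma None_in_gp_emb_conductor: "None \<in> gp_emb ` conductor T"
proof (rule image_eqI)
  show "(0::'a) \<in> conductor T" by (simp add: conductor_iff)
qed (simp add: gp_emb_def)

lemma conductor_mult: "x \<in> conductor T \<Longrightarrow> y * x \<in> conductor T"
  by (simp add: conductor_iff) (metis dvd_mult mult.left_commute)

lemma conductor_mult_frac:
  assumes ab: "frac_integral a b" "b \<noteq> 0" and x: "x \<in> conductor T" and c: "a * x = b * c"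
  shows "c \<in> conductor T"
  unfolding conductor_iff
proof (intro allI impI)
  fix a' b' :: 'a
  assume "frac_integral a' b'"
  then have "b * b' dvd (a * a') * x"
    using ab x frac_integral_mult conductor_iff by blast
  also have "(a * a') * x = a' * (a * x)" by (simp add: ac_simps)
  also have "\<dots> = b * (a' * c)" by (simp add: c ac_simps)
  finally show "b' dvd a' * c" using ab(2) by (rule dvd_mult_cancel_left_nonzero)
qed

lemma gp_emb_conductor_mult:
  assumes \<beta>: "\<beta> \<in> A_nor T" and x: "x \<in> conductor T"
  shows "gp_mult \<beta> (gp_emb x) \<in> gp_emb ` conductor T"
  using \<beta>
proof (cases rule: A_nor_cases)
  case 1
  then show ?thesis using None_in_gp_emb_conductor by simp
next
  case (2 a b)
  show ?thesis
  proof (cases "x = 0")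
    case True
    then show ?thesis using None_in_gp_emb_conductor by (simp add: gp_emb_def)
  next
    case False
    obtain c where c: "a * x = b * c" using x 2 conductor_iff by blast
    have "gp_mult \<beta> (gp_emb x) = Some (frac (a * x) b)"
      using 2 False by (simp add: gp_mult_frac_gp_emb)
    also have "\<dots> = gp_emb c"
      using frac_eq_gp_emb_iff[OF mult_nonzero[OF 2(1) False] 2(2)] c by simp
    finally show ?thesis using conductor_mult_frac[OF 2(3,2) x c] by blast
  qed
qed

context
  assumes seminormal: "seminormal T"
begin

lemma seminormal_dvd_of_dvd_square_cube:
  assumes "b ^ 2 dvd a ^ 2" and "b ^ 3 dvd (a::'a) ^ 3"
  shows "b dvd a"
proof (cases "b = 0")
  case True
  then show ?thesis using assms(1) by (simp add: zero_power_pointed power_eq_zero_iff_cancellative)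
next
  case False
  obtain x y where x: "a ^ 2 = b ^ 2 * x" and y: "a ^ 3 = b ^ 3 * y"
    using assms by (auto elim!: dvdE)
  have "x ^ 3 * b ^ 6 = (b ^ 2 * x) ^ 3"
    by (simp add: power_mult_distrib ac_simps flip: power_mult)
  also have "\<dots> = (a ^ 2) ^ 3" by (simp only: x)
  also have "\<dots> = (a ^ 3) ^ 2" by (simp flip: power_mult)
  also have "\<dots> = (b ^ 3 * y) ^ 2" by (simp only: y)
  also have "\<dots> = y ^ 2 * b ^ 6" by (simp add: power_mult_distrib ac_simps flip: power_mult)
  finally have "x ^ 3 = y ^ 2"
    by (rule mult_right_cancel_nonzero) (simp add: False power_eq_zero_iff_cancellative)
  then obtain z where "x = z ^ 2" "y = z ^ 3"
    using seminormal unfolding seminormal_def by blast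
  then have "a ^ 2 = (b * z) ^ 2" "a ^ 3 = (b * z) ^ 3"
    using x y by (simp_all add: power_mult_distrib)
  then have "a = b * z" using seminormal unfolding seminormal_def reduced_def by blast
  then show ?thesis ..
qed

lemma seminormal_dvd_of_dvd_powers:
  "N \<ge> 1 \<Longrightarrow> (\<forall>k\<ge>N. b ^ k dvd a ^ k) \<Longrightarrow> b dvd (a::'a)"
proof (induction N rule: nat_induct_at_least)
  case base
  then show ?case by (metis power_one_right order_refl)
next
  case (Suc N)
  have "(b ^ N) ^ 2 dvd (a ^ N) ^ 2" "(b ^ N) ^ 3 dvd (a ^ N) ^ 3"
    using Suc.prems Suc.hyps by (simp_all flip: power_mult)
  then have "b ^ N dvd a ^ N" by (rule seminormal_dvd_of_dvd_square_cube)
  then have "\<forall>k\<ge>N. b ^ k dvd a ^ k" using Suc.prems le_Suc_eq by blast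
  then show ?case by (rule Suc.IH)
qed

lemma conductor_radical:
  assumes n: "n \<ge> 1" and yn: "y ^ n \<in> conductor T"
  shows "y \<in> conductor T"
  unfolding conductor_iff
proof (intro allI impI)
  fix a b :: 'a
  assume ab: "frac_integral a b"
  have "b ^ k dvd (a * y) ^ k" if k: "k \<ge> n" for k
  proof -
    have "frac_integral (a ^ k * y ^ (k - n)) (b ^ k)"
      using frac_integral_mult[OF frac_integral_power[OF ab] frac_integral_one] by simp
    then have "b ^ k dvd a ^ k * y ^ (k - n) * y ^ n" using yn conductor_iff by blast
    also have "a ^ k * y ^ (k - n) * y ^ n = (a * y) ^ k"
      using k by (simp add: power_mult_distrib mult.assoc flip: power_add)
    finally show ?thesis .
  qed
  then show "b dvd a * y" using n seminormal_dvd_of_dvd_powers by blast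
qed

lemma gp_emb_conductor_radical:
  assumes \<alpha>: "\<alpha> \<in> A_nor T" and n: "n \<ge> 1" and \<alpha>n: "gp_pow \<alpha> n \<in> gp_emb ` conductor T"
  shows "\<alpha> \<in> gp_emb ` conductor T"
  using \<alpha>
proof (cases rule: A_nor_cases)
  case 1
  then show ?thesis using None_in_gp_emb_conductor by simp
next
  case (2 a b)
  obtain x where x: "gp_pow \<alpha> n = gp_emb x" "x \<in> conductor T" using \<alpha>n by blast
  have ax: "a ^ n = b ^ n * x"
    using x 2 by (simp add: gp_pow_frac frac_eq_gp_emb_iff power_eq_zero_iff_cancellative)
  have "b ^ k dvd a ^ k" if k: "k \<ge> n" for k
  proof -
    have "b ^ (k - n) dvd a ^ (k - n) * x"
      using 2 x frac_integral_power conductor_iff by blast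
    then have "b ^ (k - n) * b ^ n dvd (a ^ (k - n) * x) * b ^ n"
      by (rule mult_dvd_mono) simp
    also have "(a ^ (k - n) * x) * b ^ n = a ^ (k - n) * a ^ n"
      using ax by (simp add: ac_simps)
    finally show ?thesis using k by (simp flip: power_add)
  qed
  then have "b dvd a" using n seminormal_dvd_of_dvd_powers by blast
  then obtain z where z: "a = b * z" ..
  then have "z ^ n * b ^ n = x * b ^ n" using ax by (simp add: power_mult_distrib ac_simps)
  then have "z ^ n = x"
    by (rule mult_right_cancel_nonzero) (simp add: 2 power_eq_zero_iff_cancellative)
  then have "z \<in> conductor T" using conductor_radical n x(2) by blast
  moreover have "\<alpha> = gp_emb z" using 2 z frac_eq_gp_emb_iff by blast
  ultimately show ?thesis by blast
qed

end

end

end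

lemma conductor_of_trivial_monoid:
  fixes T :: "'a::{comm_monoid_mult,mult_zero} itself"
  assumes "(1::'a) = 0"
  shows "conductor T = UNIV" "A_nor T = {None}" "range (gp_emb :: 'a \<Rightarrow> _) = {None}"
proof -
  have all_zero: "(x::'a) = 0" for x by (metis assms mult_1_right mult_zero_right)
  then have emb: "gp_emb (x::'a) = None" for x by (simp add: gp_emb_def)
  then have A: "gp_A T = {None}" by (simp add: gp_A_def)
  show "conductor T = UNIV" by (simp add: conductor_def emb A)
  have "gp_plus T = {None}" unfolding gp_plus_def using all_zero by blast
  then show "A_nor T = {None}" by (auto simp: A_nor_def A intro: exI[of _ 1])
  show "range (gp_emb :: 'a \<Rightarrow> _) = {None}" by (simp add: emb)
qed

theorem lemma1p19:
  fixes T :: "'a::{comm_monoid_mult,mult_zero} itself"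
  assumes "cancellative T" and "seminormal T"
  shows "is_ideal_A (conductor T) \<and> radical_A (conductor T)
     \<and> is_ideal_in (A_nor T) gp_mult None (gp_emb ` conductor T)
     \<and> radical_in (A_nor T) gp_pow (gp_emb ` conductor T)"
proof (cases "(1::'a) = 0")
  case True
  then show ?thesis
    by (simp add: conductor_of_trivial_monoid is_ideal_A_def radical_A_def is_ideal_in_def
        radical_in_def)
next
  case False
  have zero: "0 \<in> conductor T" by (simp add: conductor_iff[OF assms(1) False])
  have subset: "gp_emb ` conductor T \<subseteq> A_nor T"
    by (rule image_subsetI) (rule gp_emb_in_A_nor[OF assms(1) False])
  show ?thesis
    unfolding is_ideal_A_def radical_A_def is_ideal_in_def radical_in_def
  proof (intro conjI ballI allI impI)
    show "y * x \<in> conductor T" if "x \<in> conductor T" for x y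
      using that by (rule conductor_mult[OF assms(1) False])
    show "b \<in> conductor T" if "n \<ge> 1 \<and> b ^ n \<in> conductor T" for b n
      using that conductor_radical[OF assms(1) False assms(2)] by blast
    show "gp_mult \<beta> x \<in> gp_emb ` conductor T"
      if "\<beta> \<in> A_nor T" "x \<in> gp_emb ` conductor T" for \<beta> x
      using that gp_emb_conductor_mult[OF assms(1) False] by blast
    show "\<alpha> \<in> gp_emb ` conductor T"
      if "\<alpha> \<in> A_nor T" "n \<ge> 1" "gp_pow \<alpha> n \<in> gp_emb ` conductor T" for \<alpha> n
      using that by (rule gp_emb_conductor_radical[OF assms(1) False assms(2)])
  qed (use zero subset None_in_gp_emb_conductor[OF assms(1) False] in auto)
qed

end
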